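(* Let $V=V(\alpha_1)\otimes\cdots\otimes V(\alpha_d)$ be a standard $U_q(\widehat{\mathfrak{sl}}_2)$-module with feasible diameter $d$. Then its Drinfel'd polynomial satisfies $$P_V=\prod_{i=1}^d P_{V(\alpha_i)}.$$
   Context: Let $\mathbb F$ be an algebraically closed field and fix nonzero $q\in\mathbb F$ with $q^2\ne1$; write $[n]_q=(q^n-q^{-n})/(q-q^{-1})$. $U_q(\widehat{\mathfrak{sl}}_2)$ is the associative unital $\mathbb F$-algebra with generators $e_i^{\pm},K_i^{\pm1}$ ($i\in\{0,1\}$) and relations $K_iK_i^{-1}=K_i^{-1}K_i=1$, $K_0K_1=K_1K_0$, $K_ie_i^{\pm}K_i^{-1}=q^{\pm2}e_i^{\pm}$, $K_ie_j^{\pm}K_i^{-1}=q^{\mp2}e_j^{\pm}$ ($i\ne j$), $e_i^+e_i^--e_i^-e_i^+=(K_i-K_i^{-1})/(q-q^{-1})$, $e_0^{\pm}e_1^{\mp}=e_1^{\mp}e_0^{\pm}$, and $(e_i^\pm)^3e_j^\pm-[3]_q(e_i^\pm)^2e_j^\pm e_i^\pm+[3]_qe_i^\pm e_j^\pm(e_i^\pm)^2-e_j^\pm(e_i^\pm)^3=0$ ($i\ne j$). Tensor products of modules are formed via $e_i^+(v\otimes w)=e_i^+v\otimes K_iw+v\otimes e_i^+w$, $e_i^-(v\otimes w)=e_i^-v\otimes w+K_i^{-1}v\otimes e_i^-w$, $K_i(v\otimes w)=K_iv\otimes K_iw$. For nonzero $\alpha\in\mathbb F$, $V(\alpha)$ is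 the module with basis $x,y$ and $K_1x=qx$, $K_1y=q^{-1}y$, $e_1^-x=y$, $e_1^-y=0$, $e_1^+x=0$, $e_1^+y=x$, $K_0x=q^{-1}x$, $K_0y=qy$, $e_0^-x=0$, $e_0^-y=q\alpha^{-1}x$, $e_0^+x=q^{-1}\alpha y$, $e_0^+y=0$. A standard module of diameter $d$ is $V(\alpha_1)\otimes\cdots\otimes V(\alpha_d)$ with all $\alpha_i\in\mathbb F$ nonzero (for $d=0$: the trivial module, on which each $e_i^\pm$ acts as $0$ and each $K_i^{\pm1}$ as $1$). An integer $d$ is feasible if $d\ge0$ and $q^{2i}\ne1$ for $1\le i\le d$. For a standard $V$ of diameter $d$, $U_0$ is the $1$-dimensional span of $x\otimes\cdots\otimes x$. Fix nonzero $b,c,b^*,c^*\in\mathbb F$ and $u,v,u^*,v^*\in\mathbb F$ with $uv^*=-bb^*q^{-1}(q-q^{-1})^2$ and $vu^*=-cc^*q^{-1}(q-q^{-1})^2$; set $R=ue_0^++ve_1^-K_1$ and $L=u^*e_1^++v^*e_0^-K_0$. For a standard module $V$ of feasible diameter $d$ and $0\le i\le d$, $\zeta_i$ is the scalar by which $L^iR^i$ acts on $U_0$, and $\sigma_i=\zeta_i/\prod_{k=1}^i(q^k-q^{-k})^2$. For $i\ge0$ let $f_i=bb^*q^{-2i}+cc^*q^{2i}-\lambda\in\mathbb F[\lambda]$. The Drinfel'd polynomial of $V$ is the monic degree-$d$ polynomial $P_V=(-1)^d\sum_{i=0}^d\sigma_{d-i}f_0f_1\cdots f_{i-1}$. *)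

theory Defs
  imports "HOL-Computational_Algebra.Polynomial"
begin

text \<open>Generators of U_q(sl2-hat) that we need: e_i^+, e_i^-, K_i, K_i^{-1}.\<close>
datatype gen = E0p | E0m | E1p | E1m | K0g | K1g | K0ig | K1ig

text \<open>Matrix of a generator on V(alpha) in the basis x (True), y (False):
  sgl q al g b b' is the coefficient of basis vector b' in g applied to b.\<close>
definition sgl :: "'a::field \<Rightarrow> 'a \<Rightarrow> gen \<Rightarrow> bool \<Rightarrow> bool \<Rightarrow> 'a" where
"sgl q al g b b' = (case g of
    K1g \<Rightarrow> if b = b' then (if b then q else inverse q) else 0
  | K1ig \<Rightarrow> if b = b' then (if b then inverse q else q) else 0
  | K0g \<Rightarrow> if b = b' then (if b then inverse q else q) else 0
  | K0ig \<Rightarrow> if b = b' then (if b then q else inverse q) else 0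
  | E1m \<Rightarrow> if b \<and> \<not> b' then 1 else 0
  | E1p \<Rightarrow> if \<not> b \<and> b' then 1 else 0
  | E0m \<Rightarrow> if \<not> b \<and> b' then q * inverse al else 0
  | E0p \<Rightarrow> if b \<and> \<not> b' then inverse q * al else 0)"

text \<open>The K-factor appearing in the coproduct of each e-generator.\<close>
fun kof :: "gen \<Rightarrow> gen" where
  "kof E0p = K0g" | "kof E1p = K1g" | "kof E0m = K0ig" | "kof E1m = K1ig" | "kof g = g"

text \<open>Matrix of a generator on V(a_1) \<otimes> ... \<otimes> V(a_d), basis indexed by bool lists of length d
  (tensor product via the given coproduct; V(a_1) \<otimes> (V(a_2) \<otimes> ...)).\<close>
fun tmat :: "'a::field \<Rightarrow> 'a list \<Rightarrow> gen \<Rightarrow> bool list \<Rightarrow> bool list \<Rightarrow> 'a" where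
  "tmat q [] g [] [] = (if g \<in> {K0g, K1g, K0ig, K1ig} then 1 else 0)"
| "tmat q (a # as) g (b # w) (b' # w') =
     (if g \<in> {E0p, E1p} then
        sgl q a g b b' * tmat q as (kof g) w w' + (if b = b' then 1 else 0) * tmat q as g w w'
      else if g \<in> {E0m, E1m} then
        sgl q a g b b' * (if w = w' \<and> length w = length as then 1 else 0)
          + sgl q a (kof g) b b' * tmat q as g w w'
      else sgl q a g b b' * tmat q as g w w')"
| "tmat q _ g _ _ = 0"

text \<open>Vectors of the standard module are coefficient functions on basis words of length d.\<close>
definition tapp :: "'a::field \<Rightarrow> 'a list \<Rightarrow> gen \<Rightarrow> (bool list \<Rightarrow> 'a) \<Rightarrow> (bool list \<Rightarrow> 'a)" where
"tapp q as g f = (\<lambda>w'. \<Sum>w\<in>{w. length w = length as}. f w * tmat q as g w w')"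

definition Rop :: "'a::field \<Rightarrow> 'a \<Rightarrow> 'a \<Rightarrow> 'a list \<Rightarrow> (bool list \<Rightarrow> 'a) \<Rightarrow> (bool list \<Rightarrow> 'a)" where
"Rop q u v as f = (\<lambda>w. u * tapp q as E0p f w + v * tapp q as E1m (tapp q as K1g f) w)"

definition Lop :: "'a::field \<Rightarrow> 'a \<Rightarrow> 'a \<Rightarrow> 'a list \<Rightarrow> (bool list \<Rightarrow> 'a) \<Rightarrow> (bool list \<Rightarrow> 'a)" where
"Lop q us vs as f = (\<lambda>w. us * tapp q as E1p f w + vs * tapp q as E0m (tapp q as K0g f) w)"

text \<open>The vector x \<otimes> ... \<otimes> x spanning U_0.\<close>
definition xvec :: "nat \<Rightarrow> bool list \<Rightarrow> 'a::field" where
"xvec d = (\<lambda>w. if w = replicate d True then 1 else 0)"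

text \<open>zeta_i: the scalar by which L^i R^i acts on U_0 (coefficient of x\<otimes>...\<otimes>x in L^i R^i (x\<otimes>...\<otimes>x)).\<close>
definition zeta :: "'a::field \<Rightarrow> 'a \<Rightarrow> 'a \<Rightarrow> 'a \<Rightarrow> 'a \<Rightarrow> 'a list \<Rightarrow> nat \<Rightarrow> 'a" where
"zeta q u v us vs as i =
   ((Lop q us vs as ^^ i) ((Rop q u v as ^^ i) (xvec (length as)))) (replicate (length as) True)"

definition sigma :: "'a::field \<Rightarrow> 'a \<Rightarrow> 'a \<Rightarrow> 'a \<Rightarrow> 'a \<Rightarrow> 'a list \<Rightarrow> nat \<Rightarrow> 'a" where
"sigma q u v us vs as i =
   zeta q u v us vs as i / (\<Prod>k=1..i. (q ^ k - inverse q ^ k)^2)"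

definition fpol :: "'a::field \<Rightarrow> 'a \<Rightarrow> 'a \<Rightarrow> 'a \<Rightarrow> 'a \<Rightarrow> nat \<Rightarrow> 'a poly" where
"fpol q b c bs cs i = [: b * bs * inverse q ^ (2*i) + c * cs * q ^ (2*i), -1 :]"

definition drinfeld ::
  "'a::field \<Rightarrow> 'a \<Rightarrow> 'a \<Rightarrow> 'a \<Rightarrow> 'a \<Rightarrow> 'a \<Rightarrow> 'a \<Rightarrow> 'a \<Rightarrow> 'a \<Rightarrow> 'a list \<Rightarrow> 'a poly" where
"drinfeld q b c bs cs u v us vs as =
   smult ((-1) ^ length as)
     (\<Sum>i=0..length as. smult (sigma q u v us vs as (length as - i)) (\<Prod>j<i. fpol q b c bs cs j))"

definition feasible :: "'a::field \<Rightarrow> nat \<Rightarrow> bool" where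
"feasible q d = (\<forall>i\<in>{1..d}. q ^ (2*i) \<noteq> 1)"

end

theory Submission
  imports Defs
begin

(* Write V = V(a) \<otimes> V' with V' = V(a_2) \<otimes> ... \<otimes> V(a_d) of diameter n = d - 1.
   A vector of V is a coefficient function on basis words in {x,y}^d; it is homogeneous of
   degree m if it is supported on words containing exactly m letters y.  K_0 and K_1 act on
   homogeneous vectors by explicit scalars, R raises and L lowers the degree by one.
   Splitting off the first tensor factor one computes, with x' = x \<otimes> ... \<otimes> x in V',
     R^m (x \<otimes> x') = x \<otimes> R^m x' + r_m y \<otimes> R^(m-1) x',
   and, applying L^m and reading off the coefficient of x \<otimes> ... \<otimes> x,
     zeta_(j+1)(V) = zeta_(j+1)(V') + l_(j+1) r_(j+1) zeta_j(V'),
   where l_(j+1) r_(j+1) = [j+1]_q^2 (q - q^-1)^2 (kappa_a - theta_(n-j)), kappa_a being the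
   root of P_V(a) and theta_i the constant term of f_i.  After normalisation this reads
     sigma_(j+1)(V) = sigma_(j+1)(V') + (kappa_a - theta_(n-j)) sigma_j(V'),
   which is exactly the coefficient recursion of P_V = (\<lambda> - kappa_a) P_V'.  Induction on d
   then factors P_V into the linear factors P_V(a_i). *)

section \<open>q-numbers\<close>

lemma feasible_q_number_nonzero:
  fixes q :: "'a::field"
  assumes "feasible q d" "q \<noteq> 0" "1 \<le> i" "i \<le> d"
  shows "q^i - inverse q^i \<noteq> 0"
proof
  assume "q^i - inverse q^i = 0"
  then have "q^i * q^i = 1" using assms(2) by (simp add: power_inverse field_simps)
  then have "q^(2*i) = 1" by (simp add: mult_2 power_add)
  with assms(1,3,4) show False unfolding feasible_def by auto
qed

lemma q_minus_inverse_nonzero: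
  fixes q :: "'a::field"
  assumes "q \<noteq> 0" "q^2 \<noteq> 1"
  shows "q - inverse q \<noteq> 0"
proof
  assume "q - inverse q = 0"
  then have "q * q = 1" using assms(1) by (simp add: field_simps)
  then show False using assms(2) by (simp add: power2_eq_square)
qed

lemma q_geometric_sum:
  fixes q :: "'a::field"
  assumes q: "q \<noteq> 0"
  shows "(q - inverse q) * (\<Sum>m<Suc j. q^(2*m)) * inverse q^j = q^(Suc j) - inverse q^(Suc j)"
proof (induction j)
  case 0 then show ?case by simp
next
  case (Suc j)
  have shift: "q^(2*k) * inverse q^k = q^k" for k
    using q by (simp add: mult_2 power_add power_inverse)
  have "(q - inverse q) * (\<Sum>m<Suc (Suc j). q^(2*m)) * inverse q^(Suc j)
      = inverse q * ((q - inverse q) * (\<Sum>m<Suc j. q^(2*m)) * inverse q^j)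
        + (q - inverse q) * (q^(2*Suc j) * inverse q^(Suc j))"
    by (simp add: algebra_simps)
  also have "\<dots> = inverse q * (q^(Suc j) - inverse q^(Suc j)) + (q - inverse q) * q^(Suc j)"
    by (simp only: Suc.IH shift)
  also have "\<dots> = q^(Suc (Suc j)) - inverse q^(Suc (Suc j))"
    using q by (simp add: algebra_simps)
  finally show ?case .
qed

lemma q_geometric_sum_inverse:
  fixes q :: "'a::field"
  assumes q: "q \<noteq> 0"
  shows "(\<Sum>m<Suc j. inverse q^(2*m)) = (\<Sum>m<Suc j. q^(2*m)) * inverse q^(2*j)"
proof -
  have "(\<Sum>m<Suc j. inverse q^(2*m)) = (\<Sum>m<Suc j. inverse q^(2*(Suc j - Suc m)))"
    by (rule sum.nat_diff_reindex[symmetric])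
  also have "\<dots> = (\<Sum>m<Suc j. q^(2*m) * inverse q^(2*j))"
  proof (rule sum.cong)
    fix m assume "m \<in> {..<Suc j}"
    then have "q^(2*j) = q^(2*m) * q^(2*(j-m))"
      by (metis add_mult_distrib2 le_add_diff_inverse lessThan_iff less_Suc_eq_le power_add)
    then have "q^(2*m) * inverse q^(2*j) = inverse q^(2*(j-m))"
      using q by (simp add: power_inverse)
    then show "inverse q^(2*(Suc j - Suc m)) = q^(2*m) * inverse q^(2*j)" by simp
  qed simp
  finally show ?thesis by (simp only: sum_distrib_right)
qed

section \<open>The scalars attached to one tensor factor\<close>

text \<open>theta i is the constant term of f_i, and kappa a is the root of the Drinfel'd polynomial
  of V(a) (we show P_V(a) = \<lambda> - kappa a below).\<close>
definition theta :: "'a::field \<Rightarrow> 'a \<Rightarrow> 'a \<Rightarrow> 'a \<Rightarrow> 'a \<Rightarrow> nat \<Rightarrow> 'a" where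
"theta q b c bs cs i = b * bs * inverse q ^ (2*i) + c * cs * q ^ (2*i)"

definition kappa :: "'a::field \<Rightarrow> 'a \<Rightarrow> 'a \<Rightarrow> 'a \<Rightarrow> 'a \<Rightarrow> 'a \<Rightarrow> 'a" where
"kappa q u v us vs a = (u*us*a*inverse q + v*vs*q^3*inverse a) / (q - inverse q)^2"

lemma fpol_theta: "fpol q b c bs cs i = [:theta q b c bs cs i, -1:]"
  by (simp add: fpol_def theta_def)

text \<open>For f homogeneous of degree j in a product of n factors (see below), R maps x \<otimes> f to
  x \<otimes> R f + rcoeff n j (y \<otimes> f), the second term coming from u e_0^+ and v e_1^- K_1 on the
  first factor.  Dually L maps y \<otimes> f to y \<otimes> L f + lcoeff n j (x \<otimes> f).\<close>
definition rcoeff :: "'a::field \<Rightarrow> 'a \<Rightarrow> 'a \<Rightarrow> 'a \<Rightarrow> nat \<Rightarrow> nat \<Rightarrow> 'a" where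
"rcoeff q u v a n j = u * (inverse q * a) * (inverse q^n * q^(2*j)) + v * q * (q^n * inverse q^(2*j))"

definition lcoeff :: "'a::field \<Rightarrow> 'a \<Rightarrow> 'a \<Rightarrow> 'a \<Rightarrow> nat \<Rightarrow> nat \<Rightarrow> 'a" where
"lcoeff q us vs a n k = us * (q^n * inverse q^(2*k)) + vs * (q * q * inverse a) * (inverse q^n * q^(2*k))"

text \<open>The field identity behind the product of the accumulated coefficients, with Y = q^j,
  Z = q^e and G the geometric sum.\<close>
lemma accumulated_product_identity:
  fixes q :: "'a::field"
  assumes "q \<noteq> 0" "a \<noteq> 0" "Y \<noteq> 0" "Z \<noteq> 0"
  shows "(us*(Y*Z)*(G*inverse Y^2) + vs*(q*q*inverse a)*(inverse Y*inverse Z)*G) *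
         (u*(inverse q*a)*(inverse Y*inverse Z)*G + v*q*(Y*Z)*(G*inverse Y^2))
       = (G * inverse Y)^2 * (u*us*a*inverse q + v*vs*q^3*inverse a
                              + ((u*vs)*q*inverse Z^2 + (v*us)*q*Z^2))"
  using assms by (simp add: field_simps power2_eq_square power3_eq_cube)

text \<open>The key scalar computation: with n = j + e, the accumulated L- and R-coefficients
  multiply to [j+1]_q^2 (q - q^-1)^2 (kappa a - theta e).  This is where the constraints on
  u v* and v u* enter.\<close>
lemma accumulated_coeff_product:
  fixes q :: "'a::field"
  assumes q: "q \<noteq> 0" and a: "a \<noteq> 0" and qq: "q - inverse q \<noteq> 0"
    and h1: "u*vs = - b*bs*inverse q*(q - inverse q)^2"
    and h2: "v*us = - c*cs*inverse q*(q - inverse q)^2"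
    and n: "n = j + e"
  shows "(\<Sum>k<Suc j. lcoeff q us vs a n k) * (\<Sum>m<Suc j. rcoeff q u v a n m)
     = (q^(Suc j) - inverse q^(Suc j))^2 * (kappa q u v us vs a - theta q b c bs cs e)"
proof -
  define G where "G = (\<Sum>m<Suc j. q^(2*m))"
  define Z where "Z = q^e"
  have Z: "Z \<noteq> 0" "q^(2*e) = Z^2" "inverse q^(2*e) = inverse Z^2"
    unfolding Z_def using q by (simp_all add: power_mult[symmetric] mult.commute power_inverse)
  have sum_r: "(\<Sum>m<Suc j. rcoeff q u v a n m)
      = u*(inverse q*a)*inverse q^n * G + v*q*q^n*(\<Sum>m<Suc j. inverse q^(2*m))"
    unfolding G_def rcoeff_def by (simp add: sum.distrib sum_distrib_left mult_ac del: sum.lessThan_Suc)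
  have sum_l: "(\<Sum>k<Suc j. lcoeff q us vs a n k)
      = us*q^n*(\<Sum>m<Suc j. inverse q^(2*m)) + vs*(q*q*inverse a)*inverse q^n*G"
    unfolding G_def lcoeff_def by (simp add: sum.distrib sum_distrib_left mult_ac del: sum.lessThan_Suc)
  have sum_inv: "(\<Sum>m<Suc j. inverse q^(2*m)) = G * inverse (q^j)^2"
    unfolding G_def using q_geometric_sum_inverse[OF q, of j]
    by (simp add: power_inverse power_mult[symmetric] mult.commute)
  have split_n: "q^n = q^j * Z" "inverse q^n = inverse (q^j) * inverse Z"
    by (simp_all add: n Z_def power_add power_inverse)
  have "(\<Sum>k<Suc j. lcoeff q us vs a n k) * (\<Sum>m<Suc j. rcoeff q u v a n m)
     = (G * inverse (q^j))^2 * (u*us*a*inverse q + v*vs*q^3*inverse a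
                                + ((u*vs)*q*inverse Z^2 + (v*us)*q*Z^2))"
    unfolding sum_r sum_l sum_inv split_n
    by (rule accumulated_product_identity) (simp_all add: q a Z)
  also have "G * inverse (q^j) = (q^(Suc j) - inverse q^(Suc j)) / (q - inverse q)"
    using q_geometric_sum[OF q, of j] qq unfolding G_def by (simp add: field_simps power_inverse)
  also have "(u*vs)*q*inverse Z^2 + (v*us)*q*Z^2 = -((q - inverse q)^2 * theta q b c bs cs e)"
    unfolding h1 h2 theta_def Z(2,3) using q Z(1) by (simp add: field_simps)
  finally show ?thesis using qq by (simp add: kappa_def field_simps)
qed

section \<open>Splitting off the first tensor factor\<close>

lemma finite_words: "finite {w::bool list. length w = n}"
  using finite_lists_length_eq[of "UNIV::bool set" n] by simp

lemma sum_words_Suc: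
  "(\<Sum>w\<in>{w::bool list. length w = Suc n}. h w) =
   (\<Sum>w\<in>{w. length w = n}. h (True#w)) + (\<Sum>w\<in>{w. length w = n}. h (False#w))"
proof -
  have "{w::bool list. length w = Suc n} = Cons True ` {w. length w = n} \<union> Cons False ` {w. length w = n}"
    by (auto simp: length_Suc_conv)
  moreover have "sum h (Cons True ` {w. length w = n} \<union> Cons False ` {w. length w = n})
      = sum h (Cons True ` {w. length w = n}) + sum h (Cons False ` {w. length w = n})"
    by (rule sum.union_disjoint) (auto simp: finite_words)
  ultimately show ?thesis by (simp add: sum.reindex)
qed

lemma tmat_length: "length w' \<noteq> length as \<Longrightarrow> tmat q as g w w' = 0"
proof (induction as arbitrary: w w' g)
  case Nil then show ?case by (cases w; cases w') auto
next
  case (Cons a as) then show ?case by (cases w; cases w') auto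
qed

lemma tapp_length: "length w' \<noteq> length as \<Longrightarrow> tapp q as g f w' = 0"
  by (simp add: tapp_def tmat_length)

lemma tapp_Nil: "tapp q [] g f [] = (if g \<in> {K0g,K1g,K0ig,K1ig} then f [] else 0)"
  by (simp add: tapp_def)

lemma tapp_Nil_e: "g \<notin> {K0g,K1g,K0ig,K1ig} \<Longrightarrow> tapp q [] g f w = 0"
  by (cases w) (simp_all add: tapp_Nil tapp_length)

lemma tapp_Cons: "tapp q (a#as) g f (b'#w') =
  (\<Sum>w\<in>{w. length w = length as}. f (True#w) * tmat q (a#as) g (True#w) (b'#w')) +
  (\<Sum>w\<in>{w. length w = length as}. f (False#w) * tmat q (a#as) g (False#w) (b'#w'))"
  unfolding tapp_def by (simp add: sum_words_Suc)

lemma tapp_smult: "tapp q as g (\<lambda>w. c * f w) = (\<lambda>w'. c * tapp q as g f w')"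
  unfolding tapp_def by (simp add: sum_distrib_left mult_ac)

lemma tapp_add: "tapp q as g (\<lambda>w. f w + h w) = (\<lambda>w'. tapp q as g f w' + tapp q as g h w')"
  unfolding tapp_def by (rule ext) (simp add: sum.distrib algebra_simps)

lemma tapp_zero: "tapp q as g (\<lambda>w. 0) = (\<lambda>w'. 0)"
  unfolding tapp_def by simp

text \<open>kval q g is the eigenvalue of K_g (g = K0g, K1g) on the basis vector x of V(a);
  on y it is the inverse.\<close>
definition kval :: "'a::field \<Rightarrow> gen \<Rightarrow> 'a" where
"kval q g = (if g = K1g then q else inverse q)"

lemma kval_nonzero: "q \<noteq> 0 \<Longrightarrow> kval q g \<noteq> 0"
  by (simp add: kval_def)

text \<open>The coproduct formulas, read off on the first tensor factor: the action on V(a) \<otimes> V'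
  at words x w and y w, in terms of actions on V'.\<close>
lemma K_x: "g \<in> {K0g, K1g} \<Longrightarrow>
    tapp q (a#as) g f (True#w) = kval q g * tapp q as g (\<lambda>w. f (True#w)) w"
  unfolding tapp_Cons by (auto simp: sgl_def kval_def tapp_def sum_distrib_left mult_ac)

lemma K_y: "g \<in> {K0g, K1g} \<Longrightarrow>
    tapp q (a#as) g f (False#w) = inverse (kval q g) * tapp q as g (\<lambda>w. f (False#w)) w"
  unfolding tapp_Cons by (auto simp: sgl_def kval_def tapp_def sum_distrib_left mult_ac)

lemma E0p_x: "tapp q (a#as) E0p f (True#w) = tapp q as E0p (\<lambda>w. f (True#w)) w"
  unfolding tapp_Cons by (simp add: sgl_def tapp_def)

lemma E0p_y: "tapp q (a#as) E0p f (False#w) =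
    inverse q * a * tapp q as K0g (\<lambda>w. f (True#w)) w + tapp q as E0p (\<lambda>w. f (False#w)) w"
  unfolding tapp_Cons by (simp add: sgl_def tapp_def sum_distrib_left mult_ac)

lemma E1p_x: "tapp q (a#as) E1p f (True#w) =
    tapp q as K1g (\<lambda>w. f (False#w)) w + tapp q as E1p (\<lambda>w. f (True#w)) w"
  unfolding tapp_Cons by (simp add: sgl_def tapp_def)

lemma E1p_y: "tapp q (a#as) E1p f (False#w) = tapp q as E1p (\<lambda>w. f (False#w)) w"
  unfolding tapp_Cons by (simp add: sgl_def tapp_def)

lemma E1m_x: "tapp q (a#as) E1m f (True#w) = inverse q * tapp q as E1m (\<lambda>w. f (True#w)) w"
  unfolding tapp_Cons by (simp add: sgl_def tapp_def sum_distrib_left mult_ac)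

lemma mult_delta:
  "(x::'a::semiring_1) * (if P then 1 else 0) = (if P then x else 0)"
  "(c::'a::semiring_1) * (if P then x else 0) = (if P then c * x else 0)"
  "(if P then (0::'a::semiring_1) * x else 0) = 0"
  by simp_all

lemma E1m_y: "tapp q (a#as) E1m f (False#w) =
    (if length w = length as then f (True#w) else 0) + q * tapp q as E1m (\<lambda>w. f (False#w)) w"
  unfolding tapp_Cons
  by (simp add: sgl_def tapp_def sum_distrib_left mult_ac finite_words mult_delta sum.delta')

lemma E0m_x: "tapp q (a#as) E0m f (True#w) =
    (if length w = length as then q * inverse a * f (False#w) else 0) + q * tapp q as E0m (\<lambda>w. f (True#w)) w"
  unfolding tapp_Cons
  by (simp add: sgl_def tapp_def sum_distrib_left mult_ac finite_words mult_delta sum.delta')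

lemma E0m_y: "tapp q (a#as) E0m f (False#w) = inverse q * tapp q as E0m (\<lambda>w. f (False#w)) w"
  unfolding tapp_Cons by (simp add: sgl_def tapp_def sum_distrib_left mult_ac)

lemma Rop_x: "q \<noteq> 0 \<Longrightarrow> Rop q u v (a#as) f (True#w) = Rop q u v as (\<lambda>w. f (True#w)) w"
  by (simp add: Rop_def E0p_x E1m_x K_x kval_def tapp_smult)

lemma Rop_y: "q \<noteq> 0 \<Longrightarrow> Rop q u v (a#as) f (False#w) = Rop q u v as (\<lambda>w. f (False#w)) w
   + u * (inverse q * a) * tapp q as K0g (\<lambda>w. f (True#w)) w + v * q * tapp q as K1g (\<lambda>w. f (True#w)) w"
  by (cases "length w = length as")
    (simp_all add: Rop_def E0p_y E1m_y K_x K_y kval_def tapp_smult tapp_length algebra_simps)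

lemma Lop_x: "q \<noteq> 0 \<Longrightarrow> Lop q us vs (a#as) f (True#w) = Lop q us vs as (\<lambda>w. f (True#w)) w
   + us * tapp q as K1g (\<lambda>w. f (False#w)) w + vs * (q * q * inverse a) * tapp q as K0g (\<lambda>w. f (False#w)) w"
  by (cases "length w = length as")
    (simp_all add: Lop_def E1p_x E0m_x K_x K_y kval_def tapp_smult tapp_length algebra_simps)

lemma Lop_y: "q \<noteq> 0 \<Longrightarrow> Lop q us vs (a#as) f (False#w) = Lop q us vs as (\<lambda>w. f (False#w)) w"
  by (simp add: Lop_def E1p_y E0m_y K_y kval_def tapp_smult)

lemma Rop_length: "length w \<noteq> length as \<Longrightarrow> Rop q u v as f w = 0"
  by (simp add: Rop_def tapp_length)

lemma Lop_length: "length w \<noteq> length as \<Longrightarrow> Lop q us vs as f w = 0"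
  by (simp add: Lop_def tapp_length)

lemma Rop_smult: "Rop q u v as (\<lambda>w. c * f w) w = c * Rop q u v as f w"
  by (simp add: Rop_def tapp_smult algebra_simps)

lemma Lop_smult: "Lop q us vs as (\<lambda>w. c * f w) w = c * Lop q us vs as f w"
  by (simp add: Lop_def tapp_smult algebra_simps)

lemma Lop_add: "Lop q us vs as (\<lambda>w. f w + h w) w = Lop q us vs as f w + Lop q us vs as h w"
  by (simp add: Lop_def tapp_add algebra_simps)

lemma Rop_zero: "Rop q u v as (\<lambda>w. 0) = (\<lambda>w. 0)"
  by (simp add: Rop_def tapp_zero)

lemma Lop_zero: "Lop q us vs as (\<lambda>w. 0) = (\<lambda>w. 0)"
  by (simp add: Lop_def tapp_zero)

lemma Lop_power_zero: "(Lop q us vs as ^^ k) (\<lambda>w. 0) = (\<lambda>w. 0)"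
  by (induction k) (simp_all add: Lop_zero)

section \<open>The degree grading\<close>

definition homogeneous :: "'a::field list \<Rightarrow> int \<Rightarrow> (bool list \<Rightarrow> 'a) \<Rightarrow> bool" where
"homogeneous as m f = (\<forall>w. f w \<noteq> 0 \<longrightarrow> length w = length as \<and> int (count_list w False) = m)"

lemma homogeneous_Nil: "homogeneous [] m f \<longleftrightarrow> (\<forall>w. f w \<noteq> 0 \<longrightarrow> w = [] \<and> m = 0)"
  unfolding homogeneous_def by auto

lemma homogeneous_Cons: "homogeneous (a#as) m f \<longleftrightarrow>
    f [] = 0 \<and> homogeneous as m (\<lambda>w. f (True#w)) \<and> homogeneous as (m-1) (\<lambda>w. f (False#w))"
proof
  assume H: "f [] = 0 \<and> homogeneous as m (\<lambda>w. f (True#w)) \<and> homogeneous as (m-1) (\<lambda>w. f (False#w))"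
  show "homogeneous (a#as) m f"
    unfolding homogeneous_def
  proof (intro allI impI)
    fix w assume "f w \<noteq> 0"
    with H show "length w = length (a#as) \<and> int (count_list w False) = m"
      by (cases w) (auto simp: homogeneous_def)
  qed
qed (auto simp: homogeneous_def)

lemma homogeneous_negative: "homogeneous as m f \<Longrightarrow> m < 0 \<Longrightarrow> f = (\<lambda>w. 0)"
  unfolding homogeneous_def by force

lemma homogeneous_above_diameter:
  assumes "homogeneous as m f" "m > int (length as)"
  shows "f = (\<lambda>w. 0)"
proof
  fix w show "f w = 0"
    using assms count_le_length[of w False] unfolding homogeneous_def by force
qed

lemma homogeneous_zero: "homogeneous as m (\<lambda>w. 0)"
  unfolding homogeneous_def by simp

lemma homogeneous_smult: "homogeneous as m f \<Longrightarrow> homogeneous as m (\<lambda>w. c * f w)"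
  unfolding homogeneous_def by simp

lemma homogeneous_combination: "homogeneous as m f \<Longrightarrow> homogeneous as m g \<Longrightarrow> homogeneous as m h
    \<Longrightarrow> homogeneous as m (\<lambda>w. f w + c * g w + d * h w)"
  unfolding homogeneous_def by force

lemma xvec_homogeneous: "homogeneous as 0 (xvec (length as))"
  unfolding homogeneous_def xvec_def by (auto simp: count_list_0_iff)

text \<open>K_0 and K_1 act on a homogeneous vector of degree m in a product of n factors by a
  scalar: K_g has eigenvalue kval^n on x\<otimes>...\<otimes>x, and each y divides it by kval^2.\<close>
lemma K_homogeneous:
  assumes q: "q \<noteq> 0" and g: "g \<in> {K0g, K1g}"
  shows "homogeneous as (int m) f \<Longrightarrow>
    tapp q as g f w = kval q g ^ length as * inverse (kval q g) ^ (2*m) * f w"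
proof (induction as arbitrary: m f w)
  case Nil
  then show ?case using g by (cases w) (auto simp: tapp_Nil tapp_length homogeneous_Nil)
next
  case (Cons a as)
  from Cons.prems have f_Nil: "f [] = 0" and hom_x: "homogeneous as (int m) (\<lambda>w. f (True#w))"
    and hom_y: "homogeneous as (int m - 1) (\<lambda>w. f (False#w))" by (auto simp: homogeneous_Cons)
  have k: "kval q g \<noteq> 0" using q by (rule kval_nonzero)
  show ?case
  proof (cases w)
    case Nil
    then show ?thesis by (simp add: tapp_length f_Nil)
  next
    case (Cons b w')
    show ?thesis
    proof (cases b)
      case True
      then show ?thesis using Cons Cons.IH[OF hom_x] g by (simp add: K_x)
    next
      case False
      show ?thesis
      proof (cases m)
        case 0
        then have y_zero: "(\<lambda>w. f (False#w)) = (\<lambda>w. 0)" using homogeneous_negative[OF hom_y] by simp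
        then have "f (False#w') = 0" using fun_cong[OF y_zero, of w'] by simp
        with Cons False g y_zero show ?thesis by (simp add: K_y tapp_zero)
      next
        case (Suc m')
        have "homogeneous as (int m') (\<lambda>w. f (False#w))" using hom_y Suc by simp
        from Cons.IH[OF this] show ?thesis using Cons False Suc g k by (simp add: K_y field_simps)
      qed
    qed
  qed
qed

lemma K0_homogeneous: "q \<noteq> 0 \<Longrightarrow> homogeneous as (int m) f \<Longrightarrow>
    tapp q as K0g f w = inverse q ^ length as * q ^ (2*m) * f w"
  using K_homogeneous[of q K0g as m f w] by (simp add: kval_def)

lemma K1_homogeneous: "q \<noteq> 0 \<Longrightarrow> homogeneous as (int m) f \<Longrightarrow>
    tapp q as K1g f w = q ^ length as * inverse q ^ (2*m) * f w"
  using K_homogeneous[of q K1g as m f w] by (simp add: kval_def)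

lemma K_preserves_homogeneous:
  assumes q: "q \<noteq> 0" and g: "g \<in> {K0g, K1g}" and f: "homogeneous as m f"
  shows "homogeneous as m (tapp q as g f)"
proof (cases "m < 0")
  case True
  with f have "f = (\<lambda>w. 0)" by (rule homogeneous_negative)
  then show ?thesis by (simp add: tapp_zero homogeneous_zero)
next
  case False
  then obtain k where k: "m = int k" by (metis nonneg_int_cases not_less)
  have "tapp q as g f = (\<lambda>w. (kval q g ^ length as * inverse (kval q g) ^ (2*k)) * f w)"
    using K_homogeneous[OF q g f[unfolded k]] by (auto simp: mult.assoc)
  then show ?thesis using homogeneous_smult f by metis
qed

lemma Rop_raises_degree: "q \<noteq> 0 \<Longrightarrow> homogeneous as m f \<Longrightarrow> homogeneous as (m+1) (Rop q u v as f)"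
proof (induction as arbitrary: m f)
  case Nil
  have "Rop q u v [] f = (\<lambda>w. 0)" by (rule ext) (simp add: Rop_def tapp_Nil_e)
  then show ?case by (simp add: homogeneous_zero)
next
  case (Cons a as)
  from Cons.prems(2) have hom_x: "homogeneous as m (\<lambda>w. f (True#w))"
    and hom_y: "homogeneous as (m - 1) (\<lambda>w. f (False#w))" by (auto simp: homogeneous_Cons)
  have on_x: "(\<lambda>w. Rop q u v (a#as) f (True#w)) = Rop q u v as (\<lambda>w. f (True#w))"
    by (rule ext) (simp add: Rop_x Cons.prems(1))
  have on_y: "(\<lambda>w. Rop q u v (a#as) f (False#w)) = (\<lambda>w. Rop q u v as (\<lambda>w. f (False#w)) w
     + (u * (inverse q * a)) * tapp q as K0g (\<lambda>w. f (True#w)) w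
     + (v * q) * tapp q as K1g (\<lambda>w. f (True#w)) w)"
    by (rule ext) (simp add: Rop_y Cons.prems(1))
  have "homogeneous as m (Rop q u v as (\<lambda>w. f (False#w)))"
    using Cons.IH[OF Cons.prems(1) hom_y] by simp
  then have "homogeneous as (m + 1 - 1) (\<lambda>w. Rop q u v (a#as) f (False#w))"
    unfolding on_y
    by (simp, intro homogeneous_combination K_preserves_homogeneous[OF Cons.prems(1) _ hom_x]) auto
  moreover have "homogeneous as (m+1) (\<lambda>w. Rop q u v (a#as) f (True#w))"
    unfolding on_x using Cons.IH[OF Cons.prems(1) hom_x] .
  ultimately show ?case by (simp add: homogeneous_Cons Rop_length)
qed

lemma Lop_lowers_degree: "q \<noteq> 0 \<Longrightarrow> homogeneous as m f \<Longrightarrow> homogeneous as (m-1) (Lop q us vs as f)"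
proof (induction as arbitrary: m f)
  case Nil
  have "Lop q us vs [] f = (\<lambda>w. 0)" by (rule ext) (simp add: Lop_def tapp_Nil_e)
  then show ?case by (simp add: homogeneous_zero)
next
  case (Cons a as)
  from Cons.prems(2) have hom_x: "homogeneous as m (\<lambda>w. f (True#w))"
    and hom_y: "homogeneous as (m - 1) (\<lambda>w. f (False#w))" by (auto simp: homogeneous_Cons)
  have on_x: "(\<lambda>w. Lop q us vs (a#as) f (True#w)) = (\<lambda>w. Lop q us vs as (\<lambda>w. f (True#w)) w
     + us * tapp q as K1g (\<lambda>w. f (False#w)) w
     + (vs * (q * q * inverse a)) * tapp q as K0g (\<lambda>w. f (False#w)) w)"
    by (rule ext) (simp add: Lop_x Cons.prems(1))
  have on_y: "(\<lambda>w. Lop q us vs (a#as) f (False#w)) = Lop q us vs as (\<lambda>w. f (False#w))"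
    by (rule ext) (simp add: Lop_y Cons.prems(1))
  have "homogeneous as (m - 1) (\<lambda>w. Lop q us vs (a#as) f (True#w))"
    unfolding on_x
    by (intro homogeneous_combination Cons.IH[OF Cons.prems(1) hom_x]
        K_preserves_homogeneous[OF Cons.prems(1) _ hom_y]) auto
  moreover have "homogeneous as (m - 1 - 1) (\<lambda>w. Lop q us vs (a#as) f (False#w))"
    unfolding on_y using Cons.IH[OF Cons.prems(1) hom_y] .
  ultimately show ?case by (simp add: homogeneous_Cons Lop_length)
qed

lemma Rop_power_homogeneous:
  "q \<noteq> 0 \<Longrightarrow> homogeneous as (int m) ((Rop q u v as ^^ m) (xvec (length as)))"
proof (induction m)
  case 0 then show ?case by (simp add: xvec_homogeneous)
next
  case (Suc m)
  then show ?case using Rop_raises_degree[OF Suc.prems Suc.IH[OF Suc.prems]] by (simp add: add.commute)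
qed

lemma Lop_Rop_power_homogeneous: "q \<noteq> 0 \<Longrightarrow>
    homogeneous as (int m - int t) ((Lop q us vs as ^^ t) ((Rop q u v as ^^ m) (xvec (length as))))"
proof (induction t)
  case 0 then show ?case by (simp add: Rop_power_homogeneous)
next
  case (Suc t)
  then show ?case using Lop_lowers_degree[OF Suc.prems Suc.IH[OF Suc.prems]] by (simp add: algebra_simps)
qed

section \<open>The recursion for zeta\<close>

lemma Rop_power_Cons:
  assumes q: "q \<noteq> 0"
  shows "(\<lambda>w. (Rop q u v (a#as) ^^ m) (xvec (Suc (length as))) (True#w))
           = (Rop q u v as ^^ m) (xvec (length as))
    \<and> (\<lambda>w. (Rop q u v (a#as) ^^ m) (xvec (Suc (length as))) (False#w))
        = (\<lambda>w. (\<Sum>j<m. rcoeff q u v a (length as) j) * (Rop q u v as ^^ (m-1)) (xvec (length as)) w)"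
proof (induction m)
  case 0
  then show ?case by (auto simp: xvec_def)
next
  case (Suc m)
  let ?G = "(Rop q u v (a#as) ^^ m) (xvec (Suc (length as)))"
  let ?X = "xvec (length as)"
  let ?A = "\<Sum>j<m. rcoeff q u v a (length as) j"
  have on_x: "(\<lambda>w. ?G (True#w)) = (Rop q u v as ^^ m) ?X"
    and on_y: "(\<lambda>w. ?G (False#w)) = (\<lambda>w. ?A * (Rop q u v as ^^ (m-1)) ?X w)"
    using Suc.IH by auto
  have hom: "homogeneous as (int m) ((Rop q u v as ^^ m) ?X)" using Rop_power_homogeneous[OF q] .
  have R_y: "Rop q u v as (\<lambda>w. ?A * (Rop q u v as ^^ (m-1)) ?X w) w = ?A * (Rop q u v as ^^ m) ?X w" for w
    by (cases m) (simp_all add: Rop_zero Rop_smult)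
  have "(\<lambda>w. (Rop q u v (a#as) ^^ Suc m) (xvec (Suc (length as))) (True#w))
      = (Rop q u v as ^^ Suc m) ?X"
    using on_x by (simp add: Rop_x q)
  moreover have "(\<lambda>w. (Rop q u v (a#as) ^^ Suc m) (xvec (Suc (length as))) (False#w))
     = (\<lambda>w. Rop q u v as (\<lambda>w. ?G (False#w)) w + u * (inverse q * a) * tapp q as K0g (\<lambda>w. ?G (True#w)) w
           + v * q * tapp q as K1g (\<lambda>w. ?G (True#w)) w)"
    by (simp add: Rop_y q)
  moreover have "\<dots> = (\<lambda>w. (\<Sum>j<Suc m. rcoeff q u v a (length as) j) * (Rop q u v as ^^ (Suc m - 1)) ?X w)"
    unfolding on_x on_y
    by (rule ext, simp only: R_y K0_homogeneous[OF q hom] K1_homogeneous[OF q hom]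
        sum.lessThan_Suc diff_Suc_1) (simp add: rcoeff_def algebra_simps)
  ultimately show ?case by simp
qed

lemma Lop_power_Cons:
  assumes q: "q \<noteq> 0"
    and G_x: "(\<lambda>w. G (True#w)) = P"
    and G_y: "(\<lambda>w. G (False#w)) = (\<lambda>w. A * (Rop q u v as ^^ j) (xvec (length as)) w)"
    and t: "t \<le> Suc j"
  shows "(\<lambda>w. (Lop q us vs (a#as) ^^ t) G (False#w))
           = (\<lambda>w. A * (Lop q us vs as ^^ t) ((Rop q u v as ^^ j) (xvec (length as))) w)
    \<and> (\<lambda>w. (Lop q us vs (a#as) ^^ t) G (True#w)) = (\<lambda>w. (Lop q us vs as ^^ t) P w
        + (\<Sum>s<t. lcoeff q us vs a (length as) (j - s)) * A
          * (Lop q us vs as ^^ (t-1)) ((Rop q u v as ^^ j) (xvec (length as))) w)"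
  using t
proof (induction t)
  case 0
  then show ?case using G_x G_y by simp
next
  case (Suc t)
  let ?Q = "(Rop q u v as ^^ j) (xvec (length as))"
  let ?H = "(Lop q us vs (a#as) ^^ t) G"
  let ?S = "\<Sum>s<t. lcoeff q us vs a (length as) (j - s)"
  have on_y: "(\<lambda>w. ?H (False#w)) = (\<lambda>w. A * (Lop q us vs as ^^ t) ?Q w)"
    and on_x: "(\<lambda>w. ?H (True#w)) = (\<lambda>w. (Lop q us vs as ^^ t) P w + ?S * A * (Lop q us vs as ^^ (t-1)) ?Q w)"
    using Suc.IH Suc.prems by auto
  have hom: "homogeneous as (int (j - t)) ((Lop q us vs as ^^ t) ?Q)"
    using Lop_Rop_power_homogeneous[OF q, of as j t us vs u v] Suc.prems by (simp add: of_nat_diff)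
  have L_x: "Lop q us vs as (\<lambda>w. ?S * A * (Lop q us vs as ^^ (t-1)) ?Q w) w
      = ?S * A * (Lop q us vs as ^^ t) ?Q w" for w
    by (cases t) (simp_all add: Lop_zero Lop_smult)
  have "(\<lambda>w. (Lop q us vs (a#as) ^^ Suc t) G (False#w)) = (\<lambda>w. A * (Lop q us vs as ^^ Suc t) ?Q w)"
    by (rule ext) (simp add: Lop_y q on_y Lop_smult)
  moreover have "(\<lambda>w. (Lop q us vs (a#as) ^^ Suc t) G (True#w)) = (\<lambda>w. Lop q us vs as (\<lambda>w. ?H (True#w)) w
      + us * tapp q as K1g (\<lambda>w. ?H (False#w)) w + vs * (q * q * inverse a) * tapp q as K0g (\<lambda>w. ?H (False#w)) w)"
    by (rule ext) (simp add: Lop_x q)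
  moreover have "\<dots> = (\<lambda>w. (Lop q us vs as ^^ Suc t) P w
        + (\<Sum>s<Suc t. lcoeff q us vs a (length as) (j - s)) * A * (Lop q us vs as ^^ (Suc t - 1)) ?Q w)"
    unfolding on_x on_y
    by (rule ext, simp only: Lop_add L_x tapp_smult K1_homogeneous[OF q hom] K0_homogeneous[OF q hom]
        sum.lessThan_Suc diff_Suc_1) (simp add: lcoeff_def algebra_simps)
  ultimately show ?case by simp
qed

text \<open>Reading off the coefficient of x \<otimes> ... \<otimes> x gives the recursion for zeta.\<close>
lemma zeta_Cons:
  assumes q: "q \<noteq> 0"
  shows "zeta q u v us vs (a#as) (Suc j) = zeta q u v us vs as (Suc j)
     + (\<Sum>k<Suc j. lcoeff q us vs a (length as) k) * (\<Sum>m<Suc j. rcoeff q u v a (length as) m)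
       * zeta q u v us vs as j"
proof -
  let ?G = "(Rop q u v (a#as) ^^ Suc j) (xvec (Suc (length as)))"
  let ?A = "\<Sum>m<Suc j. rcoeff q u v a (length as) m"
  have G_x: "(\<lambda>w. ?G (True#w)) = (Rop q u v as ^^ Suc j) (xvec (length as))"
    and G_y: "(\<lambda>w. ?G (False#w)) = (\<lambda>w. ?A * (Rop q u v as ^^ j) (xvec (length as)) w)"
    using Rop_power_Cons[OF q, where m="Suc j" and u=u and v=v and a=a and as=as] by auto
  have "(\<lambda>w. (Lop q us vs (a#as) ^^ Suc j) ?G (True#w))
      = (\<lambda>w. (Lop q us vs as ^^ Suc j) ((Rop q u v as ^^ Suc j) (xvec (length as))) w
        + (\<Sum>s<Suc j. lcoeff q us vs a (length as) (j - s)) * ?A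
          * (Lop q us vs as ^^ j) ((Rop q u v as ^^ j) (xvec (length as))) w)"
    using Lop_power_Cons[OF q G_x G_y, where t="Suc j" and us=us and vs=vs] by auto
  moreover have "(\<Sum>s<Suc j. lcoeff q us vs a (length as) (j - s)) = (\<Sum>k<Suc j. lcoeff q us vs a (length as) k)"
    using sum.nat_diff_reindex[of "lcoeff q us vs a (length as)" "Suc j"] by simp
  ultimately show ?thesis
    unfolding zeta_def by (simp add: fun_eq_iff)
qed

lemma zeta_0: "zeta q u v us vs as 0 = 1"
  by (simp add: zeta_def xvec_def)

text \<open>R^(d+1) kills U_0 since there are no vectors of degree d+1.\<close>
lemma zeta_beyond_diameter:
  assumes q: "q \<noteq> 0"
  shows "zeta q u v us vs as (Suc (length as)) = 0"
proof -
  have "(Rop q u v as ^^ Suc (length as)) (xvec (length as)) = (\<lambda>w. 0)"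
    by (rule homogeneous_above_diameter[OF Rop_power_homogeneous[OF q]]) simp
  then show ?thesis unfolding zeta_def by (simp only: Lop_power_zero)
qed

section \<open>The recursion for sigma and for the Drinfel'd polynomial\<close>

text \<open>Dividing the zeta recursion by the squared q-factorial (1..j) times X^2.\<close>
lemma quotient_split:
  "(X::'a::field) \<noteq> 0 \<Longrightarrow> (Z1 + X^2 * M * Z0) / (P * X^2) = Z1 / (P * X^2) + M * (Z0 / P)"
  by (cases "P = 0") (simp_all add: field_simps)

lemma sigma_Cons:
  fixes q :: "'a::field"
  assumes q: "q \<noteq> 0" and a: "a \<noteq> 0" and qq: "q - inverse q \<noteq> 0"
    and h1: "u*vs = - b*bs*inverse q*(q - inverse q)^2"
    and h2: "v*us = - c*cs*inverse q*(q - inverse q)^2"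
    and j: "j \<le> length as" and nz: "q^(Suc j) - inverse q^(Suc j) \<noteq> 0"
  shows "sigma q u v us vs (a#as) (Suc j) = sigma q u v us vs as (Suc j)
     + (kappa q u v us vs a - theta q b c bs cs (length as - j)) * sigma q u v us vs as j"
proof -
  let ?M = "kappa q u v us vs a - theta q b c bs cs (length as - j)"
  let ?X = "q^(Suc j) - inverse q^(Suc j)"
  let ?P = "\<Prod>k=1..j. (q ^ k - inverse q ^ k)^2"
  have "(\<Sum>k<Suc j. lcoeff q us vs a (length as) k) * (\<Sum>m<Suc j. rcoeff q u v a (length as) m)
      = ?X^2 * ?M"
    by (rule accumulated_coeff_product[OF q a qq h1 h2]) (use j in simp)
  then have "zeta q u v us vs (a#as) (Suc j) = zeta q u v us vs as (Suc j) + ?X^2 * ?M * zeta q u v us vs as j"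
    by (simp only: zeta_Cons[OF q])
  moreover have "(\<Prod>k=1..Suc j. (q ^ k - inverse q ^ k)^2) = ?P * ?X^2" by simp
  ultimately show ?thesis
    unfolding sigma_def by (simp only: quotient_split[OF nz])
qed

lemma sigma_0: "sigma q u v us vs as 0 = 1"
  by (simp add: sigma_def zeta_0)

lemma sigma_beyond_diameter: "q \<noteq> 0 \<Longrightarrow> sigma q u v us vs as (Suc (length as)) = 0"
  by (simp add: sigma_def zeta_beyond_diameter)

lemma linear_factor_split:
  "smult x (F * [:th, -1:]) + smult ((K - th) * x) F = [:K, -1:] * smult x (F::'a::field poly)"
proof -
  have "[:K, -1:] = [:th, -1:] + smult (K - th) 1" by (simp add: one_pCons)
  then show ?thesis by (simp add: algebra_simps smult_add_left smult_add_right smult_diff_left)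
qed

lemma coefficient_recursion_factor:
  fixes s t :: "nat \<Rightarrow> 'a::field"
  assumes t0: "t 0 = 1" and s0: "s 0 = 1" and s_beyond: "s (Suc n) = 0"
    and rec: "\<And>i. i \<le> n \<Longrightarrow> t (Suc n - i) = s (Suc n - i) + (K - theta q b c bs cs i) * s (n - i)"
  shows "(\<Sum>i\<le>Suc n. smult (t (Suc n - i)) (\<Prod>j<i. fpol q b c bs cs j))
     = [:K, -1:] * (\<Sum>i\<le>n. smult (s (n - i)) (\<Prod>j<i. fpol q b c bs cs j))"
proof -
  let ?F = "\<lambda>i. \<Prod>j<i. fpol q b c bs cs j"
  let ?th = "theta q b c bs cs"
  have "(\<Sum>i\<le>Suc n. smult (t (Suc n - i)) (?F i))
      = (\<Sum>i\<le>n. smult (t (Suc n - i)) (?F i)) + ?F (Suc n)"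
    using t0 by simp
  also have "(\<Sum>i\<le>n. smult (t (Suc n - i)) (?F i))
      = (\<Sum>i\<le>n. smult (s (Suc n - i)) (?F i)) + (\<Sum>i\<le>n. smult ((K - ?th i) * s (n - i)) (?F i))"
    by (simp add: rec smult_add_left sum.distrib del: sum.atMost_Suc)
  also have "(\<Sum>i\<le>n. smult (s (Suc n - i)) (?F i)) + (\<Sum>i\<le>n. smult ((K - ?th i) * s (n - i)) (?F i)) + ?F (Suc n)
      = (\<Sum>i\<le>Suc n. smult (s (Suc n - i)) (?F i)) + (\<Sum>i\<le>n. smult ((K - ?th i) * s (n - i)) (?F i))"
    using s0 by simp
  also have "(\<Sum>i\<le>Suc n. smult (s (Suc n - i)) (?F i)) = (\<Sum>i\<le>n. smult (s (n - i)) (?F i * [:?th i, -1:]))"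
    by (subst sum.atMost_Suc_shift) (simp add: s_beyond fpol_theta del: sum.atMost_Suc)
  also have "(\<Sum>i\<le>n. smult (s (n - i)) (?F i * [:?th i, -1:])) + (\<Sum>i\<le>n. smult ((K - ?th i) * s (n - i)) (?F i))
      = (\<Sum>i\<le>n. [:K, -1:] * smult (s (n - i)) (?F i))"
    by (simp only: sum.distrib[symmetric] linear_factor_split)
  also have "\<dots> = [:K, -1:] * (\<Sum>i\<le>n. smult (s (n - i)) (?F i))"
    by (simp add: sum_distrib_left del: sum.atMost_Suc)
  finally show ?thesis .
qed

lemma sign_linear_factor:
  "smult ((-1)^Suc n) ([:K, -1:] * S) = [:-K, 1:] * smult ((-1)^n) (S::'a::field poly)"
proof -
  have "smult ((-1)^Suc n) ([:K, -1:] * S) = smult ((-1)^n) (smult (-1) [:K, -1:] * S)"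
    by (simp only: power_Suc mult.commute[of "-1"] smult_smult[symmetric] mult_smult_left)
  then show ?thesis by (simp add: mult_smult_right)
qed

lemma drinfeld_Cons:
  fixes q :: "'a::field"
  assumes q: "q \<noteq> 0" and q2: "q^2 \<noteq> 1" and a: "a \<noteq> 0"
    and h1: "u * vs = - b * bs * inverse q * (q - inverse q)^2"
    and h2: "v * us = - c * cs * inverse q * (q - inverse q)^2"
    and feas: "feasible q (Suc (length as))"
  shows "drinfeld q b c bs cs u v us vs (a#as)
           = [:- kappa q u v us vs a, 1:] * drinfeld q b c bs cs u v us vs as"
proof -
  let ?n = "length as"
  have main: "(\<Sum>i\<le>Suc ?n. smult (sigma q u v us vs (a#as) (Suc ?n - i)) (\<Prod>j<i. fpol q b c bs cs j))
     = [:kappa q u v us vs a, -1:] * (\<Sum>i\<le>?n. smult (sigma q u v us vs as (?n - i)) (\<Prod>j<i. fpol q b c bs cs j))"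
  proof (rule coefficient_recursion_factor)
    fix i assume i: "i \<le> ?n"
    have "q^(Suc (?n - i)) - inverse q^(Suc (?n - i)) \<noteq> 0"
      by (rule feasible_q_number_nonzero[OF feas q]) (use i in auto)
    from sigma_Cons[OF q a q_minus_inverse_nonzero[OF q q2] h1 h2 _ this]
    show "sigma q u v us vs (a#as) (Suc ?n - i) = sigma q u v us vs as (Suc ?n - i)
      + (kappa q u v us vs a - theta q b c bs cs i) * sigma q u v us vs as (?n - i)"
      using i by (simp add: Suc_diff_le)
  qed (simp_all add: sigma_0 sigma_beyond_diameter q)
  show ?thesis
    unfolding drinfeld_def atLeast0AtMost length_Cons main by (rule sign_linear_factor)
qed

lemma drinfeld_Nil: "drinfeld q b c bs cs u v us vs [] = 1"
  by (simp add: drinfeld_def sigma_0)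

theorem proposition7p13:
  fixes q b c bs cs u v us vs :: "'a::field" and as :: "'a list"
  assumes alg_closed: "\<forall>p :: 'a poly. degree p > 0 \<longrightarrow> (\<exists>x. poly p x = 0)"
    and "q \<noteq> 0" and "q^2 \<noteq> 1"
    and "b \<noteq> 0" and "c \<noteq> 0" and "bs \<noteq> 0" and "cs \<noteq> 0"
    and "u * vs = - b * bs * inverse q * (q - inverse q)^2"
    and "v * us = - c * cs * inverse q * (q - inverse q)^2"
    and "\<forall>a\<in>set as. a \<noteq> 0"
    and "feasible q (length as)"
  shows "drinfeld q b c bs cs u v us vs as
           = (\<Prod>i<length as. drinfeld q b c bs cs u v us vs [as ! i])"
proof -
  let ?P = "drinfeld q b c bs cs u v us vs"
  have step: "?P (a#as') = [:- kappa q u v us vs a, 1:] * ?P as'"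
    if "a \<noteq> 0" "feasible q (Suc (length as'))" for a as'
    using drinfeld_Cons[OF assms(2,3) that(1) assms(8,9) that(2)] .
  have single: "?P [a] = [:- kappa q u v us vs a, 1:]" if "a \<noteq> 0" for a
    using step[OF that] assms(3) by (simp add: drinfeld_Nil feasible_def)
  show ?thesis
    using assms(10,11)
  proof (induction as)
    case Nil
    then show ?case by (simp add: drinfeld_Nil)
  next
    case (Cons a as)
    have "feasible q (length as)" using Cons.prems(2) by (simp add: feasible_def)
    with Cons show ?case by (simp add: step single prod.lessThan_Suc_shift del: prod.lessThan_Suc)
  qed
qed

end
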